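(* Let $(A,\circ,[\cdot,\cdot])$ be a finite-dimensional dual pre-Poisson algebra and $(V;l_\circ,r_\circ,l_{[\cdot,\cdot]},r_{[\cdot,\cdot]})$ a finite-dimensional representation of it. Let $\hat A=A\oplus V^*$ with the dual pre-Poisson algebra structure $(x+u^* )\circ(y+v^* )=x\circ y-l_\circ^*(x)v^*+(-l_\circ^*+r_\circ^* )(y)u^*$, $[x+u^*,y+v^*]=[x,y]+l_{[\cdot,\cdot]}^*(x)v^*-(l_{[\cdot,\cdot]}^*+r_{[\cdot,\cdot]}^* )(y)u^*$. Let $T:V\to A$ be linear, identified with an element of $A\otimes V^*\subseteq\hat A\otimes\hat A$ via $\mathrm{Hom}(V,A)\cong A\otimes V^*$. Then $r=T+\tau(T)$ is a solution of the permutative-Leibniz Yang–Baxter equation in $\hat A$ if and only if $T$ is an $\mathcal{O}$-operator on $(A,\circ,[\cdot,\cdot])$ associated to $(V;l_\circ,r_\circ,l_{[\cdot,\cdot]},r_{[\cdot,\cdot]})$.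
   Context: Field $\mathbb{F}$ of characteristic $0$. $\tau$ is the flip $u\otimes v\mapsto v\otimes u$; for $f:A\to\mathrm{End}(V)$, $\langle f^*(x)v^*,u\rangle=-\langle v^*,f(x)u\rangle$; the identification sends $T$ to $\sum_k T(v_k)\otimes v_k^*$ for a basis $\{v_k\}$ of $V$ with dual basis $\{v_k^*\}$. Dual pre-Poisson algebra: $x\circ(y\circ z)=(x\circ y)\circ z=(y\circ x)\circ z$; $[x,[y,z]]=[[x,y],z]+[y,[x,z]]$; $[x,y\circ z]=[x,y]\circ z+y\circ[x,z]$; $[x\circ y,z]=x\circ[y,z]+y\circ[x,z]$; $[x,y]\circ z=-[y,x]\circ z$. A representation $(V;l_\circ,r_\circ,l_{[\cdot,\cdot]},r_{[\cdot,\cdot]})$: linear maps $A\to\mathrm{End}(V)$ with, for all $x,y$: $r_\circ(x)r_\circ(y)=r_\circ(y\circ x)=l_\circ(y)r_\circ(x)=r_\circ(x)l_\circ(y)$; $l_\circ(x\circ y)=l_\circ(x)l_\circ(y)=l_\circ(y)l_\circ(x)$; $l_{[\cdot,\cdot]}([x,y])=l_{[\cdot,\cdot]}(x)l_{[\cdot,\cdot]}(y)-l_{[\cdot,\cdot]}(y)l_{[\cdot,\cdot]}(x)$; $r_{[\cdot,\cdot]}([x,y])=r_{[\cdot,\cdot]}(y)r_{[\cdot,\cdot]}(x)+l_{[\cdot,\cdot]}(x)r_{[\cdot,\cdot]}(y)$; $r_{[\cdot,\cdot]}(x)r_{[\cdot,\cdot]}(y)=-r_{[\cdot,\cdot]}(x)l_{[\cdot,\cdot]}(y)$;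 $r_{[\cdot,\cdot]}(x\circ y)=r_\circ(y)r_{[\cdot,\cdot]}(x)+l_\circ(x)r_{[\cdot,\cdot]}(y)$; $l_{[\cdot,\cdot]}(x)r_\circ(y)=r_\circ(y)l_{[\cdot,\cdot]}(x)+r_\circ([x,y])$; $l_{[\cdot,\cdot]}(x)l_\circ(y)=l_\circ([x,y])+l_\circ(y)l_{[\cdot,\cdot]}(x)$; $r_{[\cdot,\cdot]}(x)r_\circ(y)=r_\circ([y,x])+l_\circ(y)r_{[\cdot,\cdot]}(x)$; $l_{[\cdot,\cdot]}(x\circ y)=l_\circ(x)l_{[\cdot,\cdot]}(y)+l_\circ(y)l_{[\cdot,\cdot]}(x)$; $r_{[\cdot,\cdot]}(x)(l_\circ-r_\circ)(y)=0$; $r_\circ(x)(l_{[\cdot,\cdot]}+r_{[\cdot,\cdot]})(y)=0$; $l_\circ([x,y]+[y,x])=0$. An $\mathcal{O}$-operator associated to it is a linear $T:V\to A$ with $T(u)\circ T(v)=T(l_\circ(T(u))v+r_\circ(T(v))u)$ and $[T(u),T(v)]=T(l_{[\cdot,\cdot]}(T(u))v+r_{[\cdot,\cdot]}(T(v))u)$. PLYBE in a dual pre-Poisson algebra $B$: with $x\blacksquare y=x\circ y-y\circ x$, $x\square y=[x,y]+[y,x]$ and $r=\sum_i a_i\otimes b_i\in B\otimes B$, $\mathbf{P}(r)=\sum_{i,j}\big(a_i\otimes a_j\otimes b_i\circ b_j-a_i\otimes b_i\circ a_j\otimes b_j+a_i\blacksquare a_j\otimes b_j\otimes b_i\big)$,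 $\mathbf{L}(r)=\sum_{i,j}\big(a_i\otimes a_j\otimes[b_i,b_j]+a_i\otimes[b_i,a_j]\otimes b_j-a_i\square a_j\otimes b_i\otimes b_j\big)$; $r$ is a solution if $\mathbf{P}(r)=\mathbf{L}(r)=0$. *)

theory Defs
  imports Main "HOL-Library.Function_Algebras"
begin

text \<open>A finite-dimensional vector space over a field 'k
 with a chosen basis indexed by a finite type 'b is identified with 'b \<Rightarrow> 'k.
 A bilinear product is given by structure constants, linear maps A \<rightarrow> End(V)
 by coefficient arrays, and tensors by coefficient arrays w.r.t. the product basis.\<close>

type_synonym ('b,'k) vec = "'b \<Rightarrow> 'k"

definition bv :: "'b \<Rightarrow> ('b,'k::zero_neq_one) vec" where
  "bv p = (\<lambda>q. if q = p then 1 else 0)"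

definition sc_mult :: "('i \<Rightarrow> 'i \<Rightarrow> 'i \<Rightarrow> 'k::comm_ring_1) \<Rightarrow> ('i::finite,'k) vec \<Rightarrow> ('i,'k) vec \<Rightarrow> ('i,'k) vec" where
  "sc_mult c x y = (\<lambda>l. \<Sum>i\<in>UNIV. \<Sum>j\<in>UNIV. x i * y j * c i j l)"

text \<open>Linear map f : A \<rightarrow> End(V), L i a b = coefficient of v_b in f(e_i)(v_a).\<close>
definition act :: "('i \<Rightarrow> 'j \<Rightarrow> 'j \<Rightarrow> 'k::comm_ring_1) \<Rightarrow> ('i::finite,'k) vec \<Rightarrow> ('j::finite,'k) vec \<Rightarrow> ('j,'k) vec" where
  "act L x v = (\<lambda>b. \<Sum>i\<in>UNIV. \<Sum>a\<in>UNIV. x i * v a * L i a b)"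

text \<open>Dual map f^* : A \<rightarrow> End(V^*), with V^* in dual-basis coordinates:
  <f^*(x) \<phi>, u> = - <\<phi>, f(x) u>.\<close>
definition dual_act :: "('i \<Rightarrow> 'j \<Rightarrow> 'j \<Rightarrow> 'k::comm_ring_1) \<Rightarrow> ('i::finite,'k) vec \<Rightarrow> ('j::finite,'k) vec \<Rightarrow> ('j,'k) vec" where
  "dual_act L x \<phi> = (\<lambda>a. - (\<Sum>b\<in>UNIV. \<phi> b * act L x (bv a) b))"

definition dual_pre_poisson :: "(('b,'k::ab_group_add) vec \<Rightarrow> ('b,'k) vec \<Rightarrow> ('b,'k) vec) \<Rightarrow> (('b,'k) vec \<Rightarrow> ('b,'k) vec \<Rightarrow> ('b,'k) vec) \<Rightarrow> bool" where
  "dual_pre_poisson circ br \<longleftrightarrow> (\<forall>x y z.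
      circ x (circ y z) = circ (circ x y) z \<and>
      circ (circ x y) z = circ (circ y x) z \<and>
      br x (br y z) = br (br x y) z + br y (br x z) \<and>
      br x (circ y z) = circ (br x y) z + circ y (br x z) \<and>
      br (circ x y) z = circ x (br y z) + circ y (br x z) \<and>
      circ (br x y) z = - circ (br y x) z)"

definition dpp_rep :: "('i \<Rightarrow> 'i \<Rightarrow> 'i \<Rightarrow> 'k::comm_ring_1) \<Rightarrow> ('i \<Rightarrow> 'i \<Rightarrow> 'i \<Rightarrow> 'k)
   \<Rightarrow> ('i \<Rightarrow> 'j \<Rightarrow> 'j \<Rightarrow> 'k) \<Rightarrow> ('i \<Rightarrow> 'j \<Rightarrow> 'j \<Rightarrow> 'k) \<Rightarrow> ('i \<Rightarrow> 'j \<Rightarrow> 'j \<Rightarrow> 'k) \<Rightarrow> ('i \<Rightarrow> 'j \<Rightarrow> 'j \<Rightarrow> 'k)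
   \<Rightarrow> ('i::finite) itself \<Rightarrow> ('j::finite) itself \<Rightarrow> bool" where
  "dpp_rep C B lc rc lb rb _ _ \<longleftrightarrow> (\<forall>(x::('i,'k) vec) (y::('i,'k) vec) (v::('j,'k) vec).
     act rc x (act rc y v) = act rc (sc_mult C y x) v \<and>
     act rc (sc_mult C y x) v = act lc y (act rc x v) \<and>
     act lc y (act rc x v) = act rc x (act lc y v) \<and>
     act lc (sc_mult C x y) v = act lc x (act lc y v) \<and>
     act lc x (act lc y v) = act lc y (act lc x v) \<and>
     act lb (sc_mult B x y) v = act lb x (act lb y v) - act lb y (act lb x v) \<and>
     act rb (sc_mult B x y) v = act rb y (act rb x v) + act lb x (act rb y v) \<and>
     act rb x (act rb y v) = - act rb x (act lb y v) \<and>
     act rb (sc_mult C x y) v = act rc y (act rb x v) + act lc x (act rb y v) \<and>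
     act lb x (act rc y v) = act rc y (act lb x v) + act rc (sc_mult B x y) v \<and>
     act lb x (act lc y v) = act lc (sc_mult B x y) v + act lc y (act lb x v) \<and>
     act rb x (act rc y v) = act rc (sc_mult B y x) v + act lc y (act rb x v) \<and>
     act lb (sc_mult C x y) v = act lc x (act lb y v) + act lc y (act lb x v) \<and>
     act rb x (act lc y v - act rc y v) = 0 \<and>
     act rc x (act lb y v + act rb y v) = 0 \<and>
     act lc (sc_mult B x y + sc_mult B y x) v = 0)"

definition lin_ap :: "('i \<Rightarrow> 'j \<Rightarrow> 'k::comm_ring_1) \<Rightarrow> ('j::finite,'k) vec \<Rightarrow> ('i,'k) vec" where
  "lin_ap Tm u = (\<lambda>i. \<Sum>a\<in>UNIV. Tm i a * u a)"

definition is_O_operator :: "('i \<Rightarrow> 'i \<Rightarrow> 'i \<Rightarrow> 'k::comm_ring_1) \<Rightarrow> ('i \<Rightarrow> 'i \<Rightarrow> 'i \<Rightarrow> 'k)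
   \<Rightarrow> ('i \<Rightarrow> 'j \<Rightarrow> 'j \<Rightarrow> 'k) \<Rightarrow> ('i \<Rightarrow> 'j \<Rightarrow> 'j \<Rightarrow> 'k) \<Rightarrow> ('i \<Rightarrow> 'j \<Rightarrow> 'j \<Rightarrow> 'k) \<Rightarrow> ('i \<Rightarrow> 'j \<Rightarrow> 'j \<Rightarrow> 'k)
   \<Rightarrow> ('i::finite \<Rightarrow> 'j::finite \<Rightarrow> 'k) \<Rightarrow> bool" where
  "is_O_operator C B lc rc lb rb Tm \<longleftrightarrow> (\<forall>u v.
     sc_mult C (lin_ap Tm u) (lin_ap Tm v) = lin_ap Tm (act lc (lin_ap Tm u) v + act rc (lin_ap Tm v) u) \<and>
     sc_mult B (lin_ap Tm u) (lin_ap Tm v) = lin_ap Tm (act lb (lin_ap Tm u) v + act rb (lin_ap Tm v) u))"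

text \<open>The semidirect product A \<oplus> V^*, basis indexed by 'i + 'j (Inr a = v_a^*).\<close>
definition hat_circ :: "('i \<Rightarrow> 'i \<Rightarrow> 'i \<Rightarrow> 'k::comm_ring_1) \<Rightarrow> ('i \<Rightarrow> 'j \<Rightarrow> 'j \<Rightarrow> 'k) \<Rightarrow> ('i \<Rightarrow> 'j \<Rightarrow> 'j \<Rightarrow> 'k)
   \<Rightarrow> ('i::finite + 'j::finite, 'k) vec \<Rightarrow> ('i + 'j, 'k) vec \<Rightarrow> ('i + 'j, 'k) vec" where
  "hat_circ C lc rc X Y =
     (let x = (\<lambda>i. X (Inl i)); u = (\<lambda>a. X (Inr a)); y = (\<lambda>i. Y (Inl i)); v = (\<lambda>a. Y (Inr a))
      in case_sum (sc_mult C x y)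
           (- dual_act lc x v + (- dual_act lc y u + dual_act rc y u)))"

definition hat_br :: "('i \<Rightarrow> 'i \<Rightarrow> 'i \<Rightarrow> 'k::comm_ring_1) \<Rightarrow> ('i \<Rightarrow> 'j \<Rightarrow> 'j \<Rightarrow> 'k) \<Rightarrow> ('i \<Rightarrow> 'j \<Rightarrow> 'j \<Rightarrow> 'k)
   \<Rightarrow> ('i::finite + 'j::finite, 'k) vec \<Rightarrow> ('i + 'j, 'k) vec \<Rightarrow> ('i + 'j, 'k) vec" where
  "hat_br B lb rb X Y =
     (let x = (\<lambda>i. X (Inl i)); u = (\<lambda>a. X (Inr a)); y = (\<lambda>i. Y (Inl i)); v = (\<lambda>a. Y (Inr a))
      in case_sum (sc_mult B x y)
           (dual_act lb x v - (dual_act lb y u + dual_act rb y u)))"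

text \<open>Tensors: 2-tensors r p q = coefficient of E_p \<otimes> E_q; 3-tensors similarly.\<close>
definition tens3 :: "('b,'k::comm_ring_1) vec \<Rightarrow> ('b,'k) vec \<Rightarrow> ('b,'k) vec \<Rightarrow> ('b \<Rightarrow> 'b \<Rightarrow> 'b \<Rightarrow> 'k)" where
  "tens3 x y z = (\<lambda>a b c. x a * y b * z c)"

definition PLYBE_P :: "(('b::finite,'k::comm_ring_1) vec \<Rightarrow> ('b,'k) vec \<Rightarrow> ('b,'k) vec) \<Rightarrow> ('b \<Rightarrow> 'b \<Rightarrow> 'k) \<Rightarrow> ('b \<Rightarrow> 'b \<Rightarrow> 'b \<Rightarrow> 'k)" where
  "PLYBE_P circ r = (\<Sum>p\<in>UNIV. \<Sum>q\<in>UNIV. \<Sum>p'\<in>UNIV. \<Sum>q'\<in>UNIV.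
     (\<lambda>a b c. r p q * r p' q' *
       (tens3 (bv p) (bv p') (circ (bv q) (bv q')) a b c
        - tens3 (bv p) (circ (bv q) (bv p')) (bv q') a b c
        + tens3 (circ (bv p) (bv p') - circ (bv p') (bv p)) (bv q') (bv q) a b c)))"

definition PLYBE_L :: "(('b::finite,'k::comm_ring_1) vec \<Rightarrow> ('b,'k) vec \<Rightarrow> ('b,'k) vec) \<Rightarrow> ('b \<Rightarrow> 'b \<Rightarrow> 'k) \<Rightarrow> ('b \<Rightarrow> 'b \<Rightarrow> 'b \<Rightarrow> 'k)" where
  "PLYBE_L br r = (\<Sum>p\<in>UNIV. \<Sum>q\<in>UNIV. \<Sum>p'\<in>UNIV. \<Sum>q'\<in>UNIV.
     (\<lambda>a b c. r p q * r p' q' *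
       (tens3 (bv p) (bv p') (br (bv q) (bv q')) a b c
        + tens3 (bv p) (br (bv q) (bv p')) (bv q') a b c
        - tens3 (br (bv p) (bv p') + br (bv p') (bv p)) (bv q) (bv q') a b c)))"

definition solves_PLYBE :: "(('b::finite,'k::comm_ring_1) vec \<Rightarrow> ('b,'k) vec \<Rightarrow> ('b,'k) vec)
    \<Rightarrow> (('b,'k) vec \<Rightarrow> ('b,'k) vec \<Rightarrow> ('b,'k) vec) \<Rightarrow> ('b \<Rightarrow> 'b \<Rightarrow> 'k) \<Rightarrow> bool" where
  "solves_PLYBE circ br r \<longleftrightarrow> PLYBE_P circ r = 0 \<and> PLYBE_L br r = 0"

text \<open>T \<in> Hom(V,A) \<cong> A \<otimes> V^*: T = \<Sum>_a T(v_a) \<otimes> v_a^*, and r = T + \<tau>(T).\<close>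
definition T_tensor :: "('i \<Rightarrow> 'j \<Rightarrow> 'k::comm_ring_1) \<Rightarrow> ('i + 'j \<Rightarrow> 'i + 'j \<Rightarrow> 'k)" where
  "T_tensor Tm = (\<lambda>P Q. case (P, Q) of (Inl i, Inr a) \<Rightarrow> Tm i a | _ \<Rightarrow> 0)"

definition flip2 :: "('b \<Rightarrow> 'b \<Rightarrow> 'k) \<Rightarrow> ('b \<Rightarrow> 'b \<Rightarrow> 'k)" where
  "flip2 r = (\<lambda>p q. r q p)"

end

theory Submission
  imports Defs
begin

text \<open>In \<open>A \<oplus> V\<^sup>*\<close> the subspace \<open>A\<close> is a subalgebra and \<open>V\<^sup>*\<close> is an ideal with
  \<open>V\<^sup>* \<circ> V\<^sup>* = [V\<^sup>*, V\<^sup>*] = 0\<close>, while \<open>r = T + \<tau>(T)\<close> lies in \<open>A \<otimes> V\<^sup>* + V\<^sup>* \<otimes> A\<close>.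
  Hence the only components of \<open>P(r)\<close> and \<open>L(r)\<close> that can be nonzero are those in
  \<open>V\<^sup>* \<otimes> V\<^sup>* \<otimes> A\<close>, \<open>V\<^sup>* \<otimes> A \<otimes> V\<^sup>*\<close> and \<open>A \<otimes> V\<^sup>* \<otimes> V\<^sup>*\<close>, and each of them is a signed
  combination of the structure constants of the defect
  \<open>T(u) \<circ> T(v) - T(l\<^sub>\<circ>(T u) v + r\<^sub>\<circ>(T v) u)\<close>, respectively of its bracket analogue.
  So \<open>P(r) = 0\<close> and \<open>L(r) = 0\<close> are exactly the two identities of an \<open>\<O>\<close>-operator.\<close>

lemma sum_fun_apply: "sum f A x = (\<Sum>a\<in>A. f a x)"
  by (induction A rule: infinite_finite_induct) auto

lemma sum_UNIV_Plus:
  "(\<Sum>x\<in>UNIV. f x) = (\<Sum>i\<in>UNIV. f (Inl i)) + (\<Sum>a\<in>UNIV. f (Inr a))"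
  for f :: "'a::finite + 'b::finite \<Rightarrow> 'c::comm_monoid_add"
  using sum.Plus[of "UNIV::'a set" "UNIV::'b set" f] by (simp add: comp_def)

lemma if_zero_mult: "(if P then y else 0) * x = (if P then y * x else (0::'a::semiring_0))"
  by simp

lemma mult_if_zero: "x * (if P then y else 0) = (if P then x * y else (0::'a::semiring_0))"
  by simp

lemma sum_if_zero: "(\<Sum>x\<in>A. if P then f x else 0) = (if P then sum f A else 0)"
  by simp

lemmas delta_simps = bv_def if_zero_mult mult_if_zero sum_if_zero

lemma PLYBE_P_apply:
  fixes circ :: "('b::finite,'k::comm_ring_1) vec \<Rightarrow> ('b,'k) vec \<Rightarrow> ('b,'k) vec"
  shows "PLYBE_P circ r a b c =
    (\<Sum>q\<in>UNIV. \<Sum>q'\<in>UNIV. r a q * r b q' * circ (bv q) (bv q') c)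
  - (\<Sum>q\<in>UNIV. \<Sum>p'\<in>UNIV. r a q * r p' c * circ (bv q) (bv p') b)
  + (\<Sum>p\<in>UNIV. \<Sum>p'\<in>UNIV. r p c * r p' b * (circ (bv p) (bv p') a - circ (bv p') (bv p) a))"
  by (simp add: PLYBE_P_def sum_fun_apply tens3_def sum.distrib sum_subtractf ring_distribs
      delta_simps)

lemma PLYBE_L_apply:
  fixes br :: "('b::finite,'k::comm_ring_1) vec \<Rightarrow> ('b,'k) vec \<Rightarrow> ('b,'k) vec"
  shows "PLYBE_L br r a b c =
    (\<Sum>q\<in>UNIV. \<Sum>q'\<in>UNIV. r a q * r b q' * br (bv q) (bv q') c)
  + (\<Sum>q\<in>UNIV. \<Sum>p'\<in>UNIV. r a q * r p' c * br (bv q) (bv p') b)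
  - (\<Sum>p\<in>UNIV. \<Sum>p'\<in>UNIV. r p b * r p' c * (br (bv p) (bv p') a + br (bv p') (bv p) a))"
  by (simp add: PLYBE_L_def sum_fun_apply tens3_def sum.distrib sum_subtractf ring_distribs
      delta_simps)

lemma sum_reverse3:
  "(\<Sum>x\<in>A. \<Sum>y\<in>B. \<Sum>z\<in>C. f x y z) = (\<Sum>z\<in>C. \<Sum>y\<in>B. \<Sum>x\<in>A. f x y z)"
proof -
  have "(\<Sum>x\<in>A. \<Sum>y\<in>B. \<Sum>z\<in>C. f x y z) = (\<Sum>x\<in>A. \<Sum>z\<in>C. \<Sum>y\<in>B. f x y z)"
    by (rule sum.cong[OF refl sum.swap])
  also have "\<dots> = (\<Sum>z\<in>C. \<Sum>x\<in>A. \<Sum>y\<in>B. f x y z)"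
    by (rule sum.swap)
  also have "\<dots> = (\<Sum>z\<in>C. \<Sum>y\<in>B. \<Sum>x\<in>A. f x y z)"
    by (rule sum.cong[OF refl sum.swap])
  finally show ?thesis .
qed

lemma lin_ap_add: "lin_ap Tm (x + y) k = lin_ap Tm x k + lin_ap Tm y k"
  by (simp add: lin_ap_def ring_distribs sum.distrib)

lemma sc_mult_lin_ap:
  fixes Tm :: "'i::finite \<Rightarrow> 'j::finite \<Rightarrow> 'k::comm_ring_1"
  shows "sc_mult C (lin_ap Tm x) (lin_ap Tm y) k =
    (\<Sum>c\<in>UNIV. \<Sum>d\<in>UNIV. x c * y d * (\<Sum>i\<in>UNIV. \<Sum>j\<in>UNIV. Tm i c * Tm j d * C i j k))"
  apply (simp add: sc_mult_def lin_ap_def sum_distrib_left sum_distrib_right)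
  apply (simp only: sum.swap[of _ "UNIV::'i set" "UNIV::'j set"])
  apply (rule sum.cong[OF refl sum.cong[OF refl]])
  apply (subst sum.swap)
  apply (simp add: ac_simps)
  done

lemma lin_ap_act_lin_ap:
  fixes Tm :: "'i::finite \<Rightarrow> 'j::finite \<Rightarrow> 'k::comm_ring_1"
  shows "lin_ap Tm (act L (lin_ap Tm x) y) k =
    (\<Sum>c\<in>UNIV. \<Sum>d\<in>UNIV. x c * y d * (\<Sum>i\<in>UNIV. \<Sum>a\<in>UNIV. Tm i c * Tm k a * L i d a))"
  apply (simp add: act_def lin_ap_def sum_distrib_left sum_distrib_right)
  apply (simp only: sum.swap[of _ "UNIV::'i set" "UNIV::'j set"])
  apply (rule sum.cong[OF refl])
  apply (subst sum_reverse3)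
  apply (simp add: ac_simps)
  done

text \<open>Coefficient of \<open>e\<^sub>k\<close> in \<open>T(v\<^sub>c) \<cdot> T(v\<^sub>d) - T(l(T v\<^sub>c) v\<^sub>d + r(T v\<^sub>d) v\<^sub>c)\<close>,
  the product having structure constants \<open>C\<close>.\<close>
definition O_defect :: "('i \<Rightarrow> 'i \<Rightarrow> 'i \<Rightarrow> 'k::comm_ring_1) \<Rightarrow> ('i \<Rightarrow> 'j \<Rightarrow> 'j \<Rightarrow> 'k)
    \<Rightarrow> ('i \<Rightarrow> 'j \<Rightarrow> 'j \<Rightarrow> 'k) \<Rightarrow> ('i::finite \<Rightarrow> 'j::finite \<Rightarrow> 'k) \<Rightarrow> 'j \<Rightarrow> 'j \<Rightarrow> 'i \<Rightarrow> 'k" where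
  "O_defect C l r Tm c d k =
     (\<Sum>i\<in>UNIV. \<Sum>j\<in>UNIV. Tm i c * Tm j d * C i j k)
   - (\<Sum>i\<in>UNIV. \<Sum>a\<in>UNIV. Tm i c * Tm k a * l i d a)
   - (\<Sum>i\<in>UNIV. \<Sum>a\<in>UNIV. Tm i d * Tm k a * r i c a)"

lemma O_identity_defect_expansion:
  fixes Tm :: "'i::finite \<Rightarrow> 'j::finite \<Rightarrow> 'k::comm_ring_1"
  shows "sc_mult C (lin_ap Tm u) (lin_ap Tm v) k
      - lin_ap Tm (act l (lin_ap Tm u) v + act r (lin_ap Tm v) u) k
    = (\<Sum>c\<in>UNIV. \<Sum>d\<in>UNIV. u c * v d * O_defect C l r Tm c d k)"
proof -
  have r_term: "lin_ap Tm (act r (lin_ap Tm v) u) k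
      = (\<Sum>c\<in>UNIV. \<Sum>d\<in>UNIV. u c * v d * (\<Sum>i\<in>UNIV. \<Sum>a\<in>UNIV. Tm i d * Tm k a * r i c a))"
    by (subst lin_ap_act_lin_ap, subst sum.swap) (simp add: ac_simps)
  show ?thesis
    unfolding lin_ap_add r_term
    by (simp add: sc_mult_lin_ap lin_ap_act_lin_ap O_defect_def ring_distribs sum_subtractf)
qed

lemma O_identity_iff_O_defect_eq_0:
  fixes Tm :: "'i::finite \<Rightarrow> 'j::finite \<Rightarrow> 'k::comm_ring_1"
  shows "(\<forall>u v. sc_mult C (lin_ap Tm u) (lin_ap Tm v)
              = lin_ap Tm (act l (lin_ap Tm u) v + act r (lin_ap Tm v) u))
    \<longleftrightarrow> O_defect C l r Tm = 0"
proof
  assume O_identity: "\<forall>u v. sc_mult C (lin_ap Tm u) (lin_ap Tm v)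
    = lin_ap Tm (act l (lin_ap Tm u) v + act r (lin_ap Tm v) u)"
  show "O_defect C l r Tm = 0"
  proof (intro ext)
    fix c d k
    have "O_defect C l r Tm c d k
        = (\<Sum>c'\<in>UNIV. \<Sum>d'\<in>UNIV. bv c c' * bv d d' * O_defect C l r Tm c' d' k)"
      by (simp add: delta_simps)
    also have "\<dots> = 0"
      using O_identity_defect_expansion[of C Tm "bv c" "bv d" k l r] O_identity by simp
    finally show "O_defect C l r Tm c d k = 0 c d k" by simp
  qed
next
  assume "O_defect C l r Tm = 0"
  then show "\<forall>u v. sc_mult C (lin_ap Tm u) (lin_ap Tm v)
    = lin_ap Tm (act l (lin_ap Tm u) v + act r (lin_ap Tm v) u)"
    using O_identity_defect_expansion[of C Tm _ _ _ l r] by (simp add: fun_eq_iff)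
qed

definition sym_T_tensor :: "('i \<Rightarrow> 'j \<Rightarrow> 'k::comm_ring_1) \<Rightarrow> ('i + 'j \<Rightarrow> 'i + 'j \<Rightarrow> 'k)" where
  "sym_T_tensor Tm = T_tensor Tm + flip2 (T_tensor Tm)"

lemma sym_T_tensor_simps [simp]:
  "sym_T_tensor Tm (Inl i) (Inl i') = 0"
  "sym_T_tensor Tm (Inr a) (Inr a') = 0"
  "sym_T_tensor Tm (Inl i) (Inr a) = Tm i a"
  "sym_T_tensor Tm (Inr a) (Inl i) = Tm i a"
  by (simp_all add: sym_T_tensor_def T_tensor_def flip2_def)

lemma bv_Plus_restrict [simp]:
  "(\<lambda>i'. bv (Inl i) (Inl i')) = bv i" "(\<lambda>a. bv (Inl i) (Inr a)) = 0"
  "(\<lambda>i'. bv (Inr a) (Inl i')) = 0" "(\<lambda>a'. bv (Inr a) (Inr a')) = bv a"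
  by (auto simp: bv_def)

lemma sc_mult_simps [simp]:
  "sc_mult C x 0 = 0" "sc_mult C 0 y = 0" "sc_mult C (bv i) (bv j) k = C i j k"
  by (auto simp: sc_mult_def delta_simps)

lemma dual_act_simps [simp]:
  "dual_act L x 0 = 0" "dual_act L 0 \<phi> = 0" "dual_act L (bv i) (bv a) b = - L i b a"
  by (auto simp: dual_act_def act_def delta_simps)

lemma hat_circ_Inl: "hat_circ C lc rc X Y (Inl k) = sc_mult C (\<lambda>i. X (Inl i)) (\<lambda>i. Y (Inl i)) k"
  by (simp add: hat_circ_def Let_def)

lemma hat_circ_Inr: "hat_circ C lc rc X Y (Inr b) =
   - dual_act lc (\<lambda>i. X (Inl i)) (\<lambda>a. Y (Inr a)) b
   - dual_act lc (\<lambda>i. Y (Inl i)) (\<lambda>a. X (Inr a)) b + dual_act rc (\<lambda>i. Y (Inl i)) (\<lambda>a. X (Inr a)) b"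
  by (simp add: hat_circ_def Let_def)

lemma hat_br_Inl: "hat_br B lb rb X Y (Inl k) = sc_mult B (\<lambda>i. X (Inl i)) (\<lambda>i. Y (Inl i)) k"
  by (simp add: hat_br_def Let_def)

lemma hat_br_Inr: "hat_br B lb rb X Y (Inr b) =
   dual_act lb (\<lambda>i. X (Inl i)) (\<lambda>a. Y (Inr a)) b
   - dual_act lb (\<lambda>i. Y (Inl i)) (\<lambda>a. X (Inr a)) b - dual_act rb (\<lambda>i. Y (Inl i)) (\<lambda>a. X (Inr a)) b"
  by (simp add: hat_br_def Let_def)

lemmas hat_component_simps = PLYBE_P_apply PLYBE_L_apply sum_UNIV_Plus
  hat_circ_Inl hat_circ_Inr hat_br_Inl hat_br_Inr

context
  fixes Tm :: "'i::finite \<Rightarrow> 'j::finite \<Rightarrow> 'k::comm_ring_1"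
begin

lemma PLYBE_P_sym_T_tensor_Inr_Inr_Inl:
  "PLYBE_P (hat_circ C lc rc) (sym_T_tensor Tm) (Inr c) (Inr d) (Inl k) = O_defect C lc rc Tm c d k"
  by (simp add: hat_component_simps O_defect_def sum_negf sum.distrib sum_subtractf algebra_simps
      sum.swap[of _ "UNIV::'j set" "UNIV::'i set"])

lemma PLYBE_P_sym_T_tensor_Inr_Inl_Inr:
  "PLYBE_P (hat_circ C lc rc) (sym_T_tensor Tm) (Inr c) (Inl k) (Inr d) = - O_defect C lc rc Tm c d k"
  by (simp add: hat_component_simps O_defect_def sum_negf sum.distrib sum_subtractf algebra_simps
      sum.swap[of _ "UNIV::'j set" "UNIV::'i set"])

lemma PLYBE_P_sym_T_tensor_Inl_Inr_Inr:
  "PLYBE_P (hat_circ C lc rc) (sym_T_tensor Tm) (Inl k) (Inr d) (Inr c)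
     = O_defect C lc rc Tm c d k - O_defect C lc rc Tm d c k"
  by (simp add: hat_component_simps O_defect_def sum_negf sum.distrib sum_subtractf algebra_simps
      sum.swap[of _ "UNIV::'j set" "UNIV::'i set"]) (subst sum.swap, simp add: ac_simps)

lemma PLYBE_L_sym_T_tensor_Inr_Inr_Inl:
  "PLYBE_L (hat_br B lb rb) (sym_T_tensor Tm) (Inr c) (Inr d) (Inl k) = O_defect B lb rb Tm c d k"
  by (simp add: hat_component_simps O_defect_def sum_negf sum.distrib sum_subtractf algebra_simps
      sum.swap[of _ "UNIV::'j set" "UNIV::'i set"])

lemma PLYBE_L_sym_T_tensor_Inr_Inl_Inr:
  "PLYBE_L (hat_br B lb rb) (sym_T_tensor Tm) (Inr c) (Inl k) (Inr d) = O_defect B lb rb Tm c d k"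
  by (simp add: hat_component_simps O_defect_def sum_negf sum.distrib sum_subtractf algebra_simps
      sum.swap[of _ "UNIV::'j set" "UNIV::'i set"])

lemma PLYBE_L_sym_T_tensor_Inl_Inr_Inr:
  "PLYBE_L (hat_br B lb rb) (sym_T_tensor Tm) (Inl k) (Inr d) (Inr c)
     = - O_defect B lb rb Tm c d k - O_defect B lb rb Tm d c k"
  by (simp add: hat_component_simps O_defect_def sum_negf sum.distrib sum_subtractf algebra_simps
      sum.swap[of _ "UNIV::'j set" "UNIV::'i set"]) (subst sum.swap, simp add: ac_simps)

lemma PLYBE_P_sym_T_tensor_eq_0_iff:
  "PLYBE_P (hat_circ C lc rc) (sym_T_tensor Tm) = 0 \<longleftrightarrow> O_defect C lc rc Tm = 0"
proof
  assume "PLYBE_P (hat_circ C lc rc) (sym_T_tensor Tm) = 0"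
  then show "O_defect C lc rc Tm = 0"
    by (simp add: fun_eq_iff flip: PLYBE_P_sym_T_tensor_Inr_Inr_Inl)
next
  assume "O_defect C lc rc Tm = 0"
  then show "PLYBE_P (hat_circ C lc rc) (sym_T_tensor Tm) = 0"
  proof (intro ext)
    fix a b c :: "'i + 'j"
    show "PLYBE_P (hat_circ C lc rc) (sym_T_tensor Tm) a b c = 0 a b c"
      using \<open>O_defect C lc rc Tm = 0\<close>
      by (cases a; cases b; cases c) (simp_all only: PLYBE_P_sym_T_tensor_Inr_Inr_Inl
          PLYBE_P_sym_T_tensor_Inr_Inl_Inr PLYBE_P_sym_T_tensor_Inl_Inr_Inr,
         simp_all add: hat_component_simps)
  qed
qed

lemma PLYBE_L_sym_T_tensor_eq_0_iff:
  "PLYBE_L (hat_br B lb rb) (sym_T_tensor Tm) = 0 \<longleftrightarrow> O_defect B lb rb Tm = 0"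
proof
  assume "PLYBE_L (hat_br B lb rb) (sym_T_tensor Tm) = 0"
  then show "O_defect B lb rb Tm = 0"
    by (simp add: fun_eq_iff flip: PLYBE_L_sym_T_tensor_Inr_Inr_Inl)
next
  assume "O_defect B lb rb Tm = 0"
  then show "PLYBE_L (hat_br B lb rb) (sym_T_tensor Tm) = 0"
  proof (intro ext)
    fix a b c :: "'i + 'j"
    show "PLYBE_L (hat_br B lb rb) (sym_T_tensor Tm) a b c = 0 a b c"
      using \<open>O_defect B lb rb Tm = 0\<close>
      by (cases a; cases b; cases c) (simp_all only: PLYBE_L_sym_T_tensor_Inr_Inr_Inl
          PLYBE_L_sym_T_tensor_Inr_Inl_Inr PLYBE_L_sym_T_tensor_Inl_Inr_Inr,
         simp_all add: hat_component_simps)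
  qed
qed

end

theorem theorem3p21:
  fixes C B :: "'i::finite \<Rightarrow> 'i \<Rightarrow> 'i \<Rightarrow> 'k::field_char_0"
    and lc rc lb rb :: "'i \<Rightarrow> 'j::finite \<Rightarrow> 'j \<Rightarrow> 'k"
    and Tm :: "'i \<Rightarrow> 'j \<Rightarrow> 'k"
  assumes "dual_pre_poisson (sc_mult C) (sc_mult B)"
    and "dpp_rep C B lc rc lb rb TYPE('i) TYPE('j)"
  shows "solves_PLYBE (hat_circ C lc rc) (hat_br B lb rb) (T_tensor Tm + flip2 (T_tensor Tm))
         \<longleftrightarrow> is_O_operator C B lc rc lb rb Tm"
proof -
  have "solves_PLYBE (hat_circ C lc rc) (hat_br B lb rb) (sym_T_tensor Tm)
      \<longleftrightarrow> O_defect C lc rc Tm = 0 \<and> O_defect B lb rb Tm = 0"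
    unfolding solves_PLYBE_def PLYBE_P_sym_T_tensor_eq_0_iff PLYBE_L_sym_T_tensor_eq_0_iff ..
  also have "\<dots> \<longleftrightarrow> is_O_operator C B lc rc lb rb Tm"
    unfolding is_O_operator_def O_identity_iff_O_defect_eq_0[symmetric] by blast
  finally show ?thesis
    unfolding sym_T_tensor_def .
qed

end
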